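(* Let $\mathcal{H}_k$ be a truncated space with orthonormal basis $f_m(z)=(1+b_mz)z^m$, $m\ge0$, where $b_t=0$ for all $t\ge n$; let $U:\mathcal{H}_k\to H^2(\mathbb{D})$ be the unitary with $Uf_m=z^m$ for all $m\ge0$, and let $S_n = UM_zU^*$ be the $n$-shift corresponding to $k$. Let $X$ be a bounded operator on $H^2(\mathbb{D})$. Then $XS_n = S_nX$ if and only if there exists $\varphi=\sum_{m\ge0}\alpha_m z^m \in H^\infty(\mathbb{D})$ such that $X = T_\varphi + N$, where $T_\varphi$ is the analytic Toeplitz operator with symbol $\varphi$ on $H^2(\mathbb{D})$ and $N$ is the operator on $H^2(\mathbb{D})$ whose matrix with respect to $\{z^m\}_{m\ge0}$ has entries \[\langle N z^m, z^j\rangle = \langle \varphi f_m, f_j\rangle_{\mathcal{H}_k} - \alpha_{j-m}\qquad (j,m\ge 0),\] with the convention $\alpha_{l}=0$ for $l<0$. (Explicitly, the columns $m\ge n$ of this matrix vanish, its entries with $j\le m+1$ vanish, and for $0\le m<n$ and $j>n$ the entry equals $(b_m-b_{j-1})\alpha_{j-m-1}$.)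
   Context: Fix $n \ge 1$. $H^2(\mathbb{D})$ is the Hardy space on the open unit disc and $H^\infty(\mathbb{D})$ the bounded analytic functions. A truncated space is a reproducing kernel Hilbert space $\mathcal{H}_k$ of analytic functions on $\mathbb{D}$ (with scalar analytic kernel $k$) such that: $\mathbb{C}[z]\subseteq\mathcal{H}_k$; the multiplication operator $M_z$ is bounded on $\mathcal{H}_k$; and the functions $f_m(z) = (1 + b_m z)z^m$, $m \ge 0$, form an orthonormal basis of $\mathcal{H}_k$, for scalars $\{b_m\}$ with $b_t = 0$ for $t \ge n$. For $\varphi\in H^\infty(\mathbb{D})$, $\varphi f_m\in\mathcal{H}_k$, so the inner products above make sense. *)

theory Defs
  imports "HOL-Complex_Analysis.Complex_Analysis"
begin

text \<open>H^2(D) is identified with the space of square-summable Taylor coefficient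
  sequences; z^m corresponds to the m-th unit sequence.\<close>

definition l2 :: "(nat \<Rightarrow> complex) set" where
  "l2 = {a. summable (\<lambda>m. (cmod (a m))^2)}"

definition l2norm :: "(nat \<Rightarrow> complex) \<Rightarrow> real" where
  "l2norm a = sqrt (\<Sum>m. (cmod (a m))^2)"

definition bounded_op_H2 :: "((nat \<Rightarrow> complex) \<Rightarrow> (nat \<Rightarrow> complex)) \<Rightarrow> bool" where
  "bounded_op_H2 X \<longleftrightarrow>
     (\<forall>a\<in>l2. X a \<in> l2) \<and>
     (\<forall>a\<in>l2. \<forall>c\<in>l2. X (\<lambda>m. a m + c m) = (\<lambda>j. X a j + X c j)) \<and>
     (\<forall>a\<in>l2. \<forall>s::complex. X (\<lambda>m. s * a m) = (\<lambda>j. s * X a j)) \<and>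
     (\<exists>C. \<forall>a\<in>l2. l2norm (X a) \<le> C * l2norm a)"

definition taylor_coeff :: "(complex \<Rightarrow> complex) \<Rightarrow> nat \<Rightarrow> complex" where
  "taylor_coeff \<phi> m = (deriv ^^ m) \<phi> 0 / of_nat (fact m)"

definition H_infty :: "(complex \<Rightarrow> complex) set" where
  "H_infty = {\<phi>. \<phi> holomorphic_on ball 0 1 \<and> bounded (\<phi> ` ball 0 1)}"

definition cauchy_prod :: "(nat \<Rightarrow> complex) \<Rightarrow> (nat \<Rightarrow> complex) \<Rightarrow> nat \<Rightarrow> complex" where
  "cauchy_prod p q i = (\<Sum>k\<le>i. p k * q (i - k))"

definition toeplitz :: "(complex \<Rightarrow> complex) \<Rightarrow> (nat \<Rightarrow> complex) \<Rightarrow> nat \<Rightarrow> complex" where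
  "toeplitz \<phi> a = cauchy_prod (taylor_coeff \<phi>) a"

text \<open>Taylor coefficients of f_m(z) = (1 + b_m z) z^m.\<close>
definition fbasis :: "(nat \<Rightarrow> complex) \<Rightarrow> nat \<Rightarrow> nat \<Rightarrow> complex" where
  "fbasis b m i = (if i = m then 1 else if i = Suc m then b m else 0)"

text \<open>Coordinates of a power series g with respect to the basis {f_m}:
  g = sum c_m f_m  iff  g_0 = c_0 and g_(i+1) = c_(i+1) + b_i c_i.
  This is the unitary U : H_k -> H^2, U f_m = z^m.\<close>
fun coordf :: "(nat \<Rightarrow> complex) \<Rightarrow> (nat \<Rightarrow> complex) \<Rightarrow> nat \<Rightarrow> complex" where
  "coordf b g 0 = g 0"
| "coordf b g (Suc i) = g (Suc i) - b i * coordf b g i"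

definition Hk :: "(nat \<Rightarrow> complex) \<Rightarrow> (nat \<Rightarrow> complex) set" where
  "Hk b = {g. coordf b g \<in> l2}"

definition Hk_inner :: "(nat \<Rightarrow> complex) \<Rightarrow> (nat \<Rightarrow> complex) \<Rightarrow> (nat \<Rightarrow> complex) \<Rightarrow> complex" where
  "Hk_inner b g h = (\<Sum>i. coordf b g i * cnj (coordf b h i))"

text \<open>U^* : H^2 -> H_k, U^* z^m = f_m, i.e. a |-> sum a_m f_m.\<close>
definition Ustar :: "(nat \<Rightarrow> complex) \<Rightarrow> (nat \<Rightarrow> complex) \<Rightarrow> nat \<Rightarrow> complex" where
  "Ustar b a i = (case i of 0 \<Rightarrow> a 0 | Suc j \<Rightarrow> a (Suc j) + b j * a j)"

definition Mz :: "(nat \<Rightarrow> complex) \<Rightarrow> nat \<Rightarrow> complex" where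
  "Mz g i = (case i of 0 \<Rightarrow> 0 | Suc j \<Rightarrow> g j)"

definition nshift :: "(nat \<Rightarrow> complex) \<Rightarrow> (nat \<Rightarrow> complex) \<Rightarrow> nat \<Rightarrow> complex" where
  "nshift b a = coordf b (Mz (Ustar b a))"

definition alpha_ext :: "(complex \<Rightarrow> complex) \<Rightarrow> int \<Rightarrow> complex" where
  "alpha_ext \<phi> l = (if l < 0 then 0 else taylor_coeff \<phi> (nat l))"

definition N_entry :: "(nat \<Rightarrow> complex) \<Rightarrow> (complex \<Rightarrow> complex) \<Rightarrow> nat \<Rightarrow> nat \<Rightarrow> complex" where
  "N_entry b \<phi> j m =
     Hk_inner b (cauchy_prod (taylor_coeff \<phi>) (fbasis b m)) (fbasis b j)
     - alpha_ext \<phi> (int j - int m)"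

definition N_op :: "(nat \<Rightarrow> complex) \<Rightarrow> (complex \<Rightarrow> complex) \<Rightarrow> (nat \<Rightarrow> complex) \<Rightarrow> nat \<Rightarrow> complex" where
  "N_op b \<phi> a j = (\<Sum>m. N_entry b \<phi> j m * a m)"

end

theory Submission
  imports Defs
begin

text \<open>
  Conjugation by the unitary \<open>U\<close> (the coordinate map \<open>coordf b\<close>) turns \<open>S\<^sub>n\<close> into the
  unilateral shift \<open>M\<^sub>z\<close>. Hence \<open>X\<close> commutes with \<open>S\<^sub>n\<close> iff \<open>Y = U\<^sup>* X U\<close> commutes with the
  shift, i.e. iff \<open>Y\<close> is convolution with the sequence \<open>\<psi> = Y 1\<close>. Testing the boundedness of
  this convolution operator against the Szego kernels \<open>(cnj z)\<^sup>j\<close> gives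
  \<open>|\<phi> z| \<le> \<parallel>Y\<parallel>\<close> for \<open>\<phi> = \<Sum> \<psi>\<^sub>j z\<^sup>j\<close>, so \<open>\<phi> \<in> H\<^sup>\<infinity>\<close> and \<open>X = U M\<^sub>\<phi> U\<^sup>*\<close>.
  The matrix of \<open>U M\<^sub>\<phi> U\<^sup>*\<close> is \<open>\<langle>\<phi> f\<^sub>m, f\<^sub>j\<rangle>\<close>; splitting off its Toeplitz part \<open>\<alpha>\<^sub>j\<^sub>-\<^sub>m\<close>
  leaves \<open>N\<close>. Truncation (\<open>b\<^sub>t = 0\<close> for \<open>t \<ge> n\<close>) is what makes \<open>U\<close> bounded.
\<close>

lemma coordf_Ustar [simp]: "coordf b (Ustar b a) = a"
proof
  fix i show "coordf b (Ustar b a) i = a i"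
    by (induction i) (auto simp: Ustar_def)
qed

lemma Ustar_coordf [simp]: "Ustar b (coordf b g) = g"
  by (rule ext) (auto simp: Ustar_def split: nat.split)

lemma nshift_coordf: "nshift b (coordf b g) = coordf b (Mz g)"
  by (simp add: nshift_def)

lemma coordf_add: "coordf b (\<lambda>i. g i + h i) = (\<lambda>j. coordf b g j + coordf b h j)"
proof
  fix j show "coordf b (\<lambda>i. g i + h i) j = coordf b g j + coordf b h j"
    by (induction j) (auto simp: algebra_simps)
qed

lemma coordf_scale: "coordf b (\<lambda>i. c * g i) = (\<lambda>j. c * coordf b g j)"
proof
  fix j show "coordf b (\<lambda>i. c * g i) j = c * coordf b g j"
    by (induction j) (auto simp: algebra_simps)
qed

lemma coordf_sum: "coordf b (\<lambda>i. \<Sum>m\<in>A. F m i) j = (\<Sum>m\<in>A. coordf b (F m) j)"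
  by (induction j) (auto simp: sum_subtractf sum_distrib_left)

lemma Ustar_add: "Ustar b (\<lambda>j. u j + v j) = (\<lambda>i. Ustar b u i + Ustar b v i)"
  by (rule ext) (auto simp: Ustar_def algebra_simps split: nat.split)

lemma Ustar_scale: "Ustar b (\<lambda>j. c * u j) = (\<lambda>i. c * Ustar b u i)"
  by (rule ext) (auto simp: Ustar_def algebra_simps split: nat.split)

lemma coordf_cong_upto: "(\<And>i. i \<le> j \<Longrightarrow> g i = h i) \<Longrightarrow> coordf b g j = coordf b h j"
  by (induction j) auto

lemma coordf_eq_0_below: "(\<And>i. i < m \<Longrightarrow> g i = 0) \<Longrightarrow> j < m \<Longrightarrow> coordf b g j = 0"
  by (induction j) auto

lemma coordf_eq_beyond: "\<forall>t\<ge>n. b t = 0 \<Longrightarrow> n < i \<Longrightarrow> coordf b g i = g i"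
  by (cases i) auto

lemma coordf_fbasis: "coordf b (fbasis b k) i = (if i = k then 1 else 0)"
  by (induction i) (auto simp: fbasis_def)

lemma Ustar_eq_sum_fbasis:
  assumes kj: "k \<le> j"
  shows "Ustar b a k = (\<Sum>m\<le>j. a m * fbasis b m k)"
proof -
  have "(\<Sum>m\<le>j. a m * fbasis b m k) =
      (\<Sum>m\<le>j. (if m = k then a m else 0) + (if Suc m = k then b m * a m else 0))"
    by (intro sum.cong) (auto simp: fbasis_def)
  also have "\<dots> = a k + (\<Sum>m\<le>j. if Suc m = k then b m * a m else 0)"
    using kj by (simp add: sum.distrib)
  also have "\<dots> = Ustar b a k"
  proof (cases k)
    case (Suc k')
    then have "(\<Sum>m\<le>j. if Suc m = k then b m * a m else 0) = b k' * a k'"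
      using kj by (simp add: sum.delta)
    then show ?thesis using Suc by (simp add: Ustar_def)
  qed (simp add: Ustar_def)
  finally show ?thesis by simp
qed

lemma cauchy_prod_cong_upto:
  "(\<And>i. i \<le> j \<Longrightarrow> g i = h i) \<Longrightarrow> cauchy_prod p g j = cauchy_prod p h j"
  unfolding cauchy_prod_def by (intro sum.cong) auto

lemma cauchy_prod_sum:
  "cauchy_prod p (\<lambda>i. \<Sum>m\<in>A. c m * F m i) j = (\<Sum>m\<in>A. c m * cauchy_prod p (F m) j)"
proof -
  have "cauchy_prod p (\<lambda>i. \<Sum>m\<in>A. c m * F m i) j = (\<Sum>k\<le>j. \<Sum>m\<in>A. c m * (p k * F m (j - k)))"
    unfolding cauchy_prod_def by (simp add: sum_distrib_left mult.left_commute)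
  also have "\<dots> = (\<Sum>m\<in>A. \<Sum>k\<le>j. c m * (p k * F m (j - k)))"
    by (rule sum.swap)
  finally show ?thesis
    unfolding cauchy_prod_def by (simp add: sum_distrib_left)
qed

lemma cauchy_prod_head_tail:
  "cauchy_prod p g j = g 0 * p j + Mz (cauchy_prod p (\<lambda>i. g (Suc i))) j"
proof (cases j)
  case (Suc j')
  have "(\<Sum>k\<le>j'. p k * g (Suc j' - k)) = cauchy_prod p (\<lambda>i. g (Suc i)) j'"
    unfolding cauchy_prod_def by (intro sum.cong) (auto simp: Suc_diff_le)
  then show ?thesis
    using Suc by (simp add: cauchy_prod_def Mz_def)
qed (simp add: cauchy_prod_def Mz_def)

lemma cauchy_prod_Mz: "cauchy_prod p (Mz g) = Mz (cauchy_prod p g)"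
  by (rule ext, subst cauchy_prod_head_tail) (simp add: Mz_def)

lemma cauchy_prod_fbasis_below: "i < m \<Longrightarrow> cauchy_prod p (fbasis b m) i = 0"
  unfolding cauchy_prod_def fbasis_def by (intro sum.neutral) auto

definition delta0 :: "nat \<Rightarrow> complex" where
  "delta0 i = (if i = 0 then 1 else 0)"

lemma cauchy_prod_delta0: "cauchy_prod p delta0 = p"
proof
  fix j
  have "cauchy_prod p delta0 j = (\<Sum>k\<le>j. if k = j then p k else 0)"
    unfolding cauchy_prod_def delta0_def by (intro sum.cong) auto
  then show "cauchy_prod p delta0 j = p j" by simp
qed

lemma Abs_fps_cauchy_prod: "Abs_fps (cauchy_prod p q) = Abs_fps p * Abs_fps q"
  by (simp add: fps_eq_iff fps_mult_nth cauchy_prod_def atLeast0AtMost)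

subsection \<open>The matrix of \<open>U M\<^sub>\<phi> U\<^sup>*\<close>\<close>

definition Hk_mult_op ::
    "(nat \<Rightarrow> complex) \<Rightarrow> (nat \<Rightarrow> complex) \<Rightarrow> (nat \<Rightarrow> complex) \<Rightarrow> nat \<Rightarrow> complex" where
  "Hk_mult_op b p a = coordf b (cauchy_prod p (Ustar b a))"

lemma Hk_mult_op_nshift: "Hk_mult_op b p (nshift b a) = nshift b (Hk_mult_op b p a)"
  by (simp add: Hk_mult_op_def nshift_def cauchy_prod_Mz)

lemma Hk_inner_fbasis: "Hk_inner b g (fbasis b j) = coordf b g j"
proof -
  have "(\<lambda>i. coordf b g i * cnj (coordf b (fbasis b j) i)) = (\<lambda>i. if i = j then coordf b g j else 0)"
    by (auto simp: coordf_fbasis)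
  then show ?thesis
    unfolding Hk_inner_def using sums_single[of j "\<lambda>_. coordf b g j"] by (simp add: sums_iff)
qed

lemma N_entry_eq:
  "N_entry b \<phi> j m =
     coordf b (cauchy_prod (taylor_coeff \<phi>) (fbasis b m)) j - alpha_ext \<phi> (int j - int m)"
  by (simp add: N_entry_def Hk_inner_fbasis)

lemma N_entry_eq_0_if_less: "j < m \<Longrightarrow> N_entry b \<phi> j m = 0"
  unfolding N_entry_eq
  by (subst coordf_eq_0_below[of m]) (auto simp: cauchy_prod_fbasis_below alpha_ext_def)

lemma N_op_eq_finite_sum: "N_op b \<phi> a j = (\<Sum>m\<le>j. N_entry b \<phi> j m * a m)"
  unfolding N_op_def by (rule suminf_finite) (auto simp: N_entry_eq_0_if_less)

lemma Hk_mult_op_taylor_coeff: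
  "Hk_mult_op b (taylor_coeff \<phi>) a = (\<lambda>j. toeplitz \<phi> a j + N_op b \<phi> a j)"
proof
  fix j
  let ?p = "taylor_coeff \<phi>"
  let ?G = "\<lambda>i. \<Sum>m\<le>j. a m * fbasis b m i"
  \<comment> \<open>Up to index \<open>j\<close>, \<open>U\<^sup>* a\<close> agrees with the finite combination \<open>\<Sum>\<^sub>m\<^sub>\<le>\<^sub>j a\<^sub>m f\<^sub>m\<close>.\<close>
  have "Hk_mult_op b ?p a j = coordf b (cauchy_prod ?p ?G) j"
    unfolding Hk_mult_op_def
    by (intro coordf_cong_upto cauchy_prod_cong_upto Ustar_eq_sum_fbasis) simp
  also have "cauchy_prod ?p ?G = (\<lambda>i. \<Sum>m\<le>j. a m * cauchy_prod ?p (fbasis b m) i)"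
    by (rule ext, rule cauchy_prod_sum)
  also have "coordf b \<dots> j = (\<Sum>m\<le>j. a m * coordf b (cauchy_prod ?p (fbasis b m)) j)"
    by (simp add: coordf_sum coordf_scale)
  also have "\<dots> = (\<Sum>m\<le>j. N_entry b \<phi> j m * a m) + (\<Sum>m\<le>j. ?p (j - m) * a m)"
    by (simp add: N_entry_eq alpha_ext_def sum.distrib[symmetric] algebra_simps of_nat_diff
        nat_diff_distrib)
  also have "(\<Sum>m\<le>j. ?p (j - m) * a m) = toeplitz \<phi> a j"
    unfolding toeplitz_def cauchy_prod_def atLeast0AtMost[symmetric]
    by (subst sum.atLeastAtMost_rev) (simp add: mult.commute)
  finally show "Hk_mult_op b ?p a j = toeplitz \<phi> a j + N_op b \<phi> a j"
    by (simp add: N_op_eq_finite_sum)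
qed

definition l2sq :: "(nat \<Rightarrow> complex) \<Rightarrow> real" where
  "l2sq a = (\<Sum>i. (cmod (a i))\<^sup>2)"

lemma l2norm_eq_sqrt_l2sq: "l2norm a = sqrt (l2sq a)"
  by (simp add: l2norm_def l2sq_def)

lemma l2_dominated:
  assumes "summable f" "\<And>i. (cmod (h i))\<^sup>2 \<le> f i"
  shows "h \<in> l2 \<and> l2sq h \<le> suminf f"
proof -
  have "summable (\<lambda>i. (cmod (h i))\<^sup>2)"
    by (rule summable_comparison_test[OF _ assms(1)]) (use assms(2) in auto)
  then show ?thesis
    unfolding l2_def l2sq_def using suminf_le[OF assms(2) _ assms(1)] by simp
qed

lemma l2sq_nonneg: "a \<in> l2 \<Longrightarrow> 0 \<le> l2sq a"
  unfolding l2sq_def l2_def by (simp add: suminf_nonneg)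

lemma norm_le_sqrt_l2sq:
  assumes "a \<in> l2"
  shows "cmod (a i) \<le> sqrt (l2sq a)"
proof -
  from assms have "(\<Sum>i\<in>{i}. (cmod (a i))\<^sup>2) \<le> l2sq a"
    unfolding l2sq_def l2_def by (intro sum_le_suminf) auto
  then show ?thesis by (simp add: real_le_rsqrt)
qed

lemma l2_add:
  assumes "u \<in> l2" "v \<in> l2"
  shows "(\<lambda>i. u i + v i) \<in> l2 \<and> l2sq (\<lambda>i. u i + v i) \<le> 2 * l2sq u + 2 * l2sq v"
proof -
  have su: "summable (\<lambda>i. (cmod (u i))\<^sup>2)" and sv: "summable (\<lambda>i. (cmod (v i))\<^sup>2)"
    using assms by (auto simp: l2_def)
  have pt: "(cmod (u i + v i))\<^sup>2 \<le> 2 * (cmod (u i))\<^sup>2 + 2 * (cmod (v i))\<^sup>2" for i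
  proof -
    have "(cmod (u i + v i))\<^sup>2 \<le> (cmod (u i) + cmod (v i))\<^sup>2"
      by (intro power_mono norm_triangle_ineq) simp
    also have "\<dots> \<le> 2 * (cmod (u i))\<^sup>2 + 2 * (cmod (v i))\<^sup>2"
      using sum_squares_ge_zero[of "cmod (u i) - cmod (v i)" 0]
      by (simp add: power2_eq_square algebra_simps)
    finally show ?thesis .
  qed
  have sf: "summable (\<lambda>i. 2 * (cmod (u i))\<^sup>2 + 2 * (cmod (v i))\<^sup>2)"
    using su sv by (intro summable_add summable_mult)
  have "(\<Sum>i. 2 * (cmod (u i))\<^sup>2 + 2 * (cmod (v i))\<^sup>2) = 2 * l2sq u + 2 * l2sq v"
    unfolding l2sq_def using su sv by (simp add: suminf_add[symmetric] suminf_mult)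
  with l2_dominated[OF sf pt] show ?thesis by simp
qed

lemma l2_mult_bounded:
  assumes "\<And>i. cmod (c i) \<le> B" "g \<in> l2"
  shows "(\<lambda>i. c i * g i) \<in> l2 \<and> l2sq (\<lambda>i. c i * g i) \<le> B\<^sup>2 * l2sq g"
proof -
  have sg: "summable (\<lambda>i. (cmod (g i))\<^sup>2)" using assms(2) by (simp add: l2_def)
  have "(cmod (c i * g i))\<^sup>2 \<le> B\<^sup>2 * (cmod (g i))\<^sup>2" for i
    using assms(1)[of i] by (simp add: norm_mult power_mult_distrib mult_right_mono power_mono)
  then show ?thesis
    using l2_dominated[of "\<lambda>i. B\<^sup>2 * (cmod (g i))\<^sup>2"] sg
    by (simp add: suminf_mult l2sq_def)
qed

lemma l2_Mz:
  assumes "g \<in> l2"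
  shows "Mz g \<in> l2 \<and> l2sq (Mz g) = l2sq g"
proof -
  from assms have "summable (\<lambda>i. (cmod (Mz g (Suc i)))\<^sup>2)" by (simp add: Mz_def l2_def)
  then have "summable (\<lambda>i. (cmod (Mz g i))\<^sup>2)" using summable_Suc_iff by blast
  moreover from this have "(\<Sum>i. (cmod (Mz g (Suc i)))\<^sup>2) = (\<Sum>i. (cmod (Mz g i))\<^sup>2)"
    by (subst suminf_split_head) (auto simp: Mz_def)
  ultimately show ?thesis by (simp add: l2_def l2sq_def Mz_def)
qed

lemma l2_tail: "g \<in> l2 \<Longrightarrow> (\<lambda>i. g (Suc i)) \<in> l2"
  unfolding l2_def using summable_Suc_iff[of "\<lambda>i. (cmod (g i))\<^sup>2"] by simp

lemma delta0_l2: "delta0 \<in> l2"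
  unfolding l2_def delta0_def mem_Collect_eq by (rule summable_finite[of "{0}"]) auto

definition l2_bounded :: "((nat \<Rightarrow> complex) \<Rightarrow> (nat \<Rightarrow> complex)) \<Rightarrow> bool" where
  "l2_bounded T \<longleftrightarrow> (\<forall>a\<in>l2. T a \<in> l2) \<and> (\<exists>K. \<forall>a\<in>l2. l2sq (T a) \<le> K * l2sq a)"

lemma l2_boundedI:
  "(\<And>a. a \<in> l2 \<Longrightarrow> T a \<in> l2 \<and> l2sq (T a) \<le> K * l2sq a) \<Longrightarrow> l2_bounded T"
  unfolding l2_bounded_def by blast

lemma l2_boundedE:
  assumes "l2_bounded T"
  obtains K where "K > 0" "\<And>a. a \<in> l2 \<Longrightarrow> T a \<in> l2 \<and> l2sq (T a) \<le> K * l2sq a"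
proof -
  obtain K where K: "\<And>a. a \<in> l2 \<Longrightarrow> T a \<in> l2 \<and> l2sq (T a) \<le> K * l2sq a"
    using assms unfolding l2_bounded_def by blast
  have "K * l2sq a \<le> max K 1 * l2sq a" if "a \<in> l2" for a
    using l2sq_nonneg[OF that] by (intro mult_right_mono) auto
  with K that[of "max K 1"] show thesis by fastforce
qed

lemma l2_bounded_comp:
  assumes "l2_bounded S" "l2_bounded T"
  shows "l2_bounded (\<lambda>a. S (T a))"
proof -
  from assms obtain KS KT where "KS > 0" and S: "\<And>a. a \<in> l2 \<Longrightarrow> S a \<in> l2 \<and> l2sq (S a) \<le> KS * l2sq a"
    and T: "\<And>a. a \<in> l2 \<Longrightarrow> T a \<in> l2 \<and> l2sq (T a) \<le> KT * l2sq a"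
    by (metis l2_boundedE)
  show ?thesis
  proof (rule l2_boundedI)
    fix a assume "a \<in> l2"
    with S T have "S (T a) \<in> l2" "l2sq (S (T a)) \<le> KS * l2sq (T a)" "l2sq (T a) \<le> KT * l2sq a"
      by auto
    moreover have "KS * l2sq (T a) \<le> KS * (KT * l2sq a)"
      using \<open>KS > 0\<close> \<open>l2sq (T a) \<le> KT * l2sq a\<close> by (intro mult_left_mono) auto
    ultimately show "S (T a) \<in> l2 \<and> l2sq (S (T a)) \<le> (KS * KT) * l2sq a"
      by (simp add: mult.assoc)
  qed
qed

lemma l2_bounded_cong: "(\<And>a. a \<in> l2 \<Longrightarrow> S a = T a) \<Longrightarrow> l2_bounded S \<Longrightarrow> l2_bounded T"
  unfolding l2_bounded_def by simp

lemma bounded_op_H2_imp_l2_bounded: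
  assumes "bounded_op_H2 X"
  shows "l2_bounded X"
proof -
  obtain C where C: "\<And>a. a \<in> l2 \<Longrightarrow> l2norm (X a) \<le> C * l2norm a"
    and X: "\<And>a. a \<in> l2 \<Longrightarrow> X a \<in> l2"
    using assms unfolding bounded_op_H2_def by blast
  show ?thesis
  proof (rule l2_boundedI)
    fix a assume a: "a \<in> l2"
    have "sqrt (l2sq (X a)) \<le> C * sqrt (l2sq a)"
      using C[OF a] by (simp add: l2norm_eq_sqrt_l2sq)
    then have "(sqrt (l2sq (X a)))\<^sup>2 \<le> (C * sqrt (l2sq a))\<^sup>2"
      using l2sq_nonneg[OF X[OF a]] by (intro power_mono) auto
    then show "X a \<in> l2 \<and> l2sq (X a) \<le> C\<^sup>2 * l2sq a"
      using X[OF a] l2sq_nonneg[OF a] l2sq_nonneg[OF X[OF a]] by (simp add: power_mult_distrib)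
  qed
qed

lemma norm_le_sum_if_eventually_0:
  fixes b :: "nat \<Rightarrow> complex"
  assumes "\<forall>t\<ge>n. b t = 0"
  shows "cmod (b t) \<le> (\<Sum>s<n. cmod (b s))"
proof (cases "t < n")
  case True then show ?thesis by (intro member_le_sum[where f="\<lambda>s. cmod (b s)"]) auto
next
  case False then show ?thesis using assms by (simp add: sum_nonneg)
qed

lemma Ustar_eq_add_shift: "Ustar b a = (\<lambda>i. a i + b (i - 1) * Mz a i)"
  by (rule ext) (simp add: Ustar_def Mz_def split: nat.split)

lemma Ustar_l2_bounded:
  assumes "\<And>t. cmod (b t) \<le> B"
  shows "l2_bounded (Ustar b)"
proof (rule l2_boundedI)
  fix a assume a: "a \<in> l2"
  have "Mz a \<in> l2" "l2sq (Mz a) = l2sq a" using l2_Mz[OF a] by auto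
  then have bMz: "(\<lambda>i. b (i - 1) * Mz a i) \<in> l2" "l2sq (\<lambda>i. b (i - 1) * Mz a i) \<le> B\<^sup>2 * l2sq a"
    using l2_mult_bounded[of "\<lambda>i. b (i - 1)" B "Mz a"] assms by auto
  from l2_add[OF a bMz(1)] have "Ustar b a \<in> l2"
    and "l2sq (Ustar b a) \<le> 2 * l2sq a + 2 * l2sq (\<lambda>i. b (i - 1) * Mz a i)"
    unfolding Ustar_eq_add_shift by auto
  with bMz(2) show "Ustar b a \<in> l2 \<and> l2sq (Ustar b a) \<le> (2 + 2 * B\<^sup>2) * l2sq a"
    by (simp add: ring_distribs)
qed

lemma norm_coordf_le:
  assumes b: "\<And>t. cmod (b t) \<le> B" and g: "g \<in> l2"
  shows "cmod (coordf b g i) \<le> (1 + B) ^ i * sqrt (l2sq g)"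
proof (induction i)
  case 0
  show ?case using norm_le_sqrt_l2sq[OF g] by simp
next
  case (Suc i)
  let ?s = "sqrt (l2sq g)"
  have B: "0 \<le> B" using b[of 0] norm_ge_zero[of "b 0"] by linarith
  have "1 * ?s \<le> (1 + B) ^ i * ?s"
    using B l2sq_nonneg[OF g] by (intro mult_right_mono one_le_power) auto
  moreover have "cmod (coordf b g (Suc i)) \<le> cmod (g (Suc i)) + cmod (b i) * cmod (coordf b g i)"
    using norm_triangle_ineq4[of "g (Suc i)" "b i * coordf b g i"] by (simp add: norm_mult)
  moreover have "cmod (b i) * cmod (coordf b g i) \<le> B * ((1 + B) ^ i * ?s)"
    using Suc.IH B b by (intro mult_mono) auto
  ultimately show ?case
    using norm_le_sqrt_l2sq[OF g, of "Suc i"] by (simp add: algebra_simps)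
qed

lemma coordf_l2_bounded:
  assumes b: "\<forall>t\<ge>n. b t = 0"
  shows "l2_bounded (coordf b)"
proof (rule l2_boundedI)
  define B where "B = (\<Sum>s<n. cmod (b s))"
  have bB: "cmod (b t) \<le> B" for t
    unfolding B_def by (rule norm_le_sum_if_eventually_0[OF b])
  have B: "1 \<le> 1 + B" using bB[of 0] norm_ge_zero[of "b 0"] by linarith
  define L where "L = ((1 + B) ^ n)\<^sup>2"
  fix g assume g: "g \<in> l2"
  define f where "f i = (cmod (g i))\<^sup>2 + (if i \<le> n then L * l2sq g else 0)" for i
  have sg: "summable (\<lambda>i. (cmod (g i))\<^sup>2)" using g by (simp add: l2_def)
  have sfin: "summable (\<lambda>i. if i \<le> n then L * l2sq g else 0)"
    by (rule summable_finite[of "{..n}"]) auto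
  \<comment> \<open>The first \<open>n + 1\<close> coordinates are controlled crudely; the remaining ones equal \<open>g\<close>.\<close>
  have "(cmod (coordf b g i))\<^sup>2 \<le> f i" for i
  proof (cases "i \<le> n")
    case True
    have "(cmod (coordf b g i))\<^sup>2 \<le> ((1 + B) ^ i * sqrt (l2sq g))\<^sup>2"
      by (intro power_mono norm_coordf_le bB g) simp
    also have "\<dots> = ((1 + B) ^ i)\<^sup>2 * l2sq g"
      using l2sq_nonneg[OF g] by (simp only: power_mult_distrib real_sqrt_pow2)
    also have "\<dots> \<le> L * l2sq g"
      unfolding L_def using True B l2sq_nonneg[OF g]
      by (intro mult_right_mono power_mono power_increasing) auto
    finally show ?thesis using True by (simp add: f_def add_increasing)
  next
    case False
    then show ?thesis using coordf_eq_beyond[OF b, of i g] by (simp add: f_def)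
  qed
  from l2_dominated[OF summable_add[OF sg sfin] this[unfolded f_def]]
  have "coordf b g \<in> l2 \<and> l2sq (coordf b g) \<le> l2sq g + (\<Sum>i. if i \<le> n then L * l2sq g else 0)"
    by (simp add: suminf_add[OF sg sfin, symmetric] l2sq_def)
  moreover have "(\<Sum>i. if i \<le> n then L * l2sq g else 0) = (\<Sum>i\<le>n. L * l2sq g)"
    by (subst suminf_finite[of "{..n}"]) auto
  ultimately show "coordf b g \<in> l2 \<and> l2sq (coordf b g) \<le> (1 + (n + 1) * L) * l2sq g"
    by (simp add: algebra_simps)
qed

lemma nshift_l2:
  assumes b: "\<forall>t\<ge>n. b t = 0" and a: "a \<in> l2"
  shows "nshift b a \<in> l2"
proof -
  have "Ustar b a \<in> l2"
    using Ustar_l2_bounded[OF norm_le_sum_if_eventually_0[OF b]] a by (simp add: l2_bounded_def)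
  then show ?thesis
    using coordf_l2_bounded[OF b] l2_Mz unfolding nshift_def l2_bounded_def by blast
qed

subsection \<open>The commutant of the shift\<close>

lemma shift_commuting_eq_cauchy_prod:
  assumes add: "\<And>g h. g \<in> l2 \<Longrightarrow> h \<in> l2 \<Longrightarrow> Y (\<lambda>i. g i + h i) = (\<lambda>j. Y g j + Y h j)"
    and scale: "\<And>g c. g \<in> l2 \<Longrightarrow> Y (\<lambda>i. c * g i) = (\<lambda>j. c * Y g j)"
    and shift: "\<And>g. g \<in> l2 \<Longrightarrow> Y (Mz g) = Mz (Y g)"
    and g: "g \<in> l2"
  shows "Y g = cauchy_prod (Y delta0) g"
proof -
  have head_tail: "Y g j = g 0 * Y delta0 j + Mz (Y (\<lambda>i. g (Suc i))) j" if g: "g \<in> l2" for g j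
  proof -
    have tail: "(\<lambda>i. g (Suc i)) \<in> l2" by (rule l2_tail[OF g])
    have head: "(\<lambda>i. g 0 * delta0 i) \<in> l2"
      using l2_mult_bounded[of "\<lambda>_. g 0" "cmod (g 0)" delta0] delta0_l2 by simp
    have "g = (\<lambda>i. g 0 * delta0 i + Mz (\<lambda>i. g (Suc i)) i)"
      by (rule ext) (simp add: delta0_def Mz_def split: nat.split)
    then have "Y g = Y (\<lambda>i. g 0 * delta0 i + Mz (\<lambda>i. g (Suc i)) i)"
      by (rule arg_cong)
    also have "\<dots> = (\<lambda>j. g 0 * Y delta0 j + Mz (Y (\<lambda>i. g (Suc i))) j)"
      using add[OF head] l2_Mz[OF tail] scale[OF delta0_l2] shift[OF tail] by simp
    finally show ?thesis by simp
  qed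
  show ?thesis
  proof
    fix j show "Y g j = cauchy_prod (Y delta0) g j"
      using g
    proof (induction j arbitrary: g)
      case 0
      then show ?case by (simp add: head_tail Mz_def cauchy_prod_def)
    next
      case (Suc j)
      have "Y g (Suc j) = g 0 * Y delta0 (Suc j) + Y (\<lambda>i. g (Suc i)) j"
        by (simp add: head_tail[OF Suc.prems] Mz_def)
      also have "Y (\<lambda>i. g (Suc i)) j = cauchy_prod (Y delta0) (\<lambda>i. g (Suc i)) j"
        by (rule Suc.IH[OF l2_tail[OF Suc.prems]])
      finally show ?case
        using cauchy_prod_head_tail[of "Y delta0" g "Suc j"] by (simp add: Mz_def)
    qed
  qed
qed

subsection \<open>Bounded multipliers are \<open>H\<^sup>\<infinity>\<close> functions\<close>

lemma fps_conv_radius_ge_1_if_bounded: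
  assumes "\<And>k. cmod (\<psi> k) \<le> M"
  shows "1 \<le> fps_conv_radius (Abs_fps \<psi>)"
  unfolding fps_conv_radius_def
proof (rule conv_radius_geI_ex')
  fix r :: real assume r: "0 < r" "ereal r < 1"
  show "summable (\<lambda>n. fps_nth (Abs_fps \<psi>) n * of_real r ^ n)"
  proof (rule summable_comparison_test[of _ "\<lambda>n. M * r ^ n"])
    show "summable (\<lambda>n. M * r ^ n)"
      using r by (intro summable_mult summable_geometric) simp
    show "\<exists>N. \<forall>n\<ge>N. norm (fps_nth (Abs_fps \<psi>) n * of_real r ^ n) \<le> M * r ^ n"
      using r assms by (auto simp: norm_mult norm_power intro!: mult_right_mono)
  qed
qed

lemma taylor_coeff_eval_fps: "0 < fps_conv_radius F \<Longrightarrow> taylor_coeff (eval_fps F) = fps_nth F"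
  by (rule ext) (simp add: taylor_coeff_def fps_nth_fps_expansion[OF eval_fps_has_fps_expansion])

lemma summable_norm_mult_l2:
  assumes h: "h \<in> l2" and k: "k \<in> l2" and t: "0 < t"
  shows "summable (\<lambda>j. cmod (h j) * cmod (k j)) \<and>
    (\<Sum>j. cmod (h j) * cmod (k j)) \<le> (t * l2sq h + l2sq k / t) / 2"
proof -
  have amgm: "cmod (h j) * cmod (k j) \<le> (t * (cmod (h j))\<^sup>2 + (cmod (k j))\<^sup>2 / t) / 2" for j
  proof -
    have "2 * t * (cmod (h j) * cmod (k j)) \<le> t\<^sup>2 * (cmod (h j))\<^sup>2 + (cmod (k j))\<^sup>2"
      using sum_squares_ge_zero[of "t * cmod (h j) - cmod (k j)" 0]
      by (simp add: power2_eq_square algebra_simps)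
    with t show ?thesis by (simp add: field_simps power2_eq_square)
  qed
  have sums: "(\<lambda>j. (t * (cmod (h j))\<^sup>2 + (cmod (k j))\<^sup>2 / t) / 2) sums ((t * l2sq h + l2sq k / t) / 2)"
    using h k unfolding l2sq_def l2_def by (intro sums_divide sums_add sums_mult summable_sums) auto
  have summable_prod: "summable (\<lambda>j. cmod (h j) * cmod (k j))"
    by (rule summable_comparison_test'[OF sums_summable[OF sums]]) (use amgm in simp)
  moreover have "(\<Sum>j. cmod (h j) * cmod (k j)) \<le> (t * l2sq h + l2sq k / t) / 2"
    using suminf_le[OF amgm summable_prod sums_summable[OF sums]] sums_unique[OF sums] by simp
  ultimately show ?thesis ..
qed

lemma szego_kernel_l2sq_eval:
  assumes z: "cmod z < 1"
  shows "(\<lambda>j. cnj z ^ j) \<in> l2" "1 \<le> l2sq (\<lambda>j. cnj z ^ j)"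
    "eval_fps (Abs_fps (\<lambda>j. cnj z ^ j)) z = of_real (l2sq (\<lambda>j. cnj z ^ j))"
proof -
  let ?k = "\<lambda>j. cnj z ^ j"
  have sq: "(cmod (?k j))\<^sup>2 = ((cmod z)\<^sup>2) ^ j" for j
    by (simp add: norm_power power_mult_distrib[symmetric] power2_eq_square)
  have "summable (\<lambda>j. ((cmod z)\<^sup>2) ^ j)"
    using z by (intro summable_geometric) (simp add: abs_square_less_1)
  then show k: "?k \<in> l2" by (simp add: l2_def sq)
  from norm_le_sqrt_l2sq[OF k, of 0] show "1 \<le> l2sq ?k" by simp
  have "?k j * z ^ j = of_real (((cmod z)\<^sup>2) ^ j)" for j
  proof -
    have "?k j * z ^ j = (z * cnj z) ^ j"
      by (simp add: power_mult_distrib mult.commute)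
    then show ?thesis by (simp only: complex_norm_square[symmetric] of_real_power)
  qed
  then have "eval_fps (Abs_fps ?k) z = (\<Sum>j. of_real ((cmod (?k j))\<^sup>2))"
    by (simp only: eval_fps_def fps_nth_Abs_fps sq)
  also have "\<dots> = of_real (l2sq ?k)"
    using k unfolding l2sq_def l2_def by (simp add: suminf_of_real)
  finally show "eval_fps (Abs_fps ?k) z = of_real (l2sq ?k)" .
qed

lemma norm_eval_fps_le_multiplier_bound:
  assumes bound: "\<And>g. g \<in> l2 \<Longrightarrow> cauchy_prod \<psi> g \<in> l2 \<and> l2sq (cauchy_prod \<psi> g) \<le> K * l2sq g"
    and K: "0 < K" and rad: "1 \<le> fps_conv_radius (Abs_fps \<psi>)" and z: "cmod z < 1"
  shows "cmod (eval_fps (Abs_fps \<psi>) z) \<le> sqrt K"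
proof -
  define k where "k = (\<lambda>j. cnj z ^ j)"
  define h where "h = cauchy_prod \<psi> k"
  define t where "t = 1 / sqrt K"
  have t: "0 < t"
    using K by (simp add: t_def)
  have k: "k \<in> l2" "1 \<le> l2sq k" "eval_fps (Abs_fps k) z = of_real (l2sq k)"
    unfolding k_def by (rule szego_kernel_l2sq_eval[OF z])+
  have h: "h \<in> l2" "l2sq h \<le> K * l2sq k"
    using bound[OF k(1)] by (auto simp: h_def)
  have norm_k: "cmod (k j) = cmod (z ^ j)" for j
    by (simp add: k_def norm_power)
  have z_ereal: "ereal (cmod z) < 1"
    using z by simp
  have "1 \<le> fps_conv_radius (Abs_fps k)"
    using z by (intro fps_conv_radius_ge_1_if_bounded[of _ 1]) (simp add: norm_k norm_power power_le_one)
  with rad have "eval_fps (Abs_fps h) z = eval_fps (Abs_fps \<psi>) z * eval_fps (Abs_fps k) z"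
    unfolding h_def Abs_fps_cauchy_prod
    by (intro eval_fps_mult order.strict_trans2[OF z_ereal])
  then have "cmod (eval_fps (Abs_fps \<psi>) z) * l2sq k = cmod (eval_fps (Abs_fps h) z)"
    using k(2,3) by (simp add: norm_mult)
  \<comment> \<open>On the kernel, \<open>|z\<^sup>j| = |k\<^sub>j|\<close>, so the power series of \<open>h\<close> at \<open>z\<close> is an \<open>l2\<close> pairing of \<open>h\<close> and \<open>k\<close>.\<close>
  also have "\<dots> \<le> (\<Sum>j. norm (h j * z ^ j))"
    unfolding eval_fps_def fps_nth_Abs_fps using summable_norm_mult_l2[OF h(1) k(1) t]
    by (intro summable_norm) (simp add: norm_mult norm_k)
  also have "\<dots> = (\<Sum>j. cmod (h j) * cmod (k j))"
    by (simp add: norm_mult norm_k)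
  also have "\<dots> \<le> (t * l2sq h + l2sq k / t) / 2"
    using summable_norm_mult_l2[OF h(1) k(1) t] by simp
  also have "\<dots> \<le> (t * (K * l2sq k) + l2sq k / t) / 2"
    using h(2) K by (simp add: t_def divide_right_mono)
  also have "\<dots> = sqrt K * l2sq k"
    using K by (simp add: t_def field_simps real_div_sqrt)
  finally show ?thesis
    using k(2) by simp
qed

lemma bounded_multiplier_in_H_infty:
  assumes "l2_bounded (cauchy_prod \<psi>)"
  shows "\<exists>\<phi>\<in>H_infty. taylor_coeff \<phi> = \<psi>"
proof -
  obtain K where K: "0 < K"
    and bound: "\<And>g. g \<in> l2 \<Longrightarrow> cauchy_prod \<psi> g \<in> l2 \<and> l2sq (cauchy_prod \<psi> g) \<le> K * l2sq g"
    using l2_boundedE[OF assms] by blast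
  have "\<psi> \<in> l2"
    using bound[OF delta0_l2] by (simp add: cauchy_prod_delta0)
  then have rad: "1 \<le> fps_conv_radius (Abs_fps \<psi>)"
    by (intro fps_conv_radius_ge_1_if_bounded[of _ "sqrt (l2sq \<psi>)"] norm_le_sqrt_l2sq)
  define \<phi> where "\<phi> = eval_fps (Abs_fps \<psi>)"
  have "\<phi> holomorphic_on ball 0 1"
    unfolding \<phi>_def using rad
    by (intro holomorphic_on_eval_fps ball_eball_mono) (simp add: one_ereal_def)
  moreover have "bounded (\<phi> ` ball 0 1)"
    unfolding bounded_iff \<phi>_def
    using norm_eval_fps_le_multiplier_bound[OF bound K rad] by (intro exI[of _ "sqrt K"]) auto
  moreover have "taylor_coeff \<phi> = \<psi>"
    unfolding \<phi>_def using order.strict_trans2[OF _ rad, of 0]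
    by (subst taylor_coeff_eval_fps) (simp_all add: fun_eq_iff)
  ultimately show ?thesis
    unfolding H_infty_def by blast
qed

lemma commuting_with_nshift_imp_Hk_mult_op:
  assumes b: "\<forall>t\<ge>n. b t = 0" and X: "bounded_op_H2 X"
    and comm: "\<forall>a\<in>l2. X (nshift b a) = nshift b (X a)"
  shows "\<exists>\<phi>\<in>H_infty. \<forall>a\<in>l2. X a = Hk_mult_op b (taylor_coeff \<phi>) a"
proof -
  define Y where "Y g = Ustar b (X (coordf b g))" for g
  have U: "l2_bounded (Ustar b)"
    by (rule Ustar_l2_bounded[OF norm_le_sum_if_eventually_0[OF b]])
  have C: "l2_bounded (coordf b)"
    by (rule coordf_l2_bounded[OF b])
  have "l2_bounded Y"
    unfolding Y_def
    by (rule l2_bounded_comp[OF U l2_bounded_comp[OF bounded_op_H2_imp_l2_bounded[OF X] C]])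
  have C_l2: "coordf b g \<in> l2" if "g \<in> l2" for g
    using C that by (simp add: l2_bounded_def)
  have conv: "Y g = cauchy_prod (Y delta0) g" if "g \<in> l2" for g
  proof (rule shift_commuting_eq_cauchy_prod[OF _ _ _ that])
    fix g h assume "g \<in> l2" "h \<in> l2"
    then show "Y (\<lambda>i. g i + h i) = (\<lambda>j. Y g j + Y h j)"
      using X C_l2 by (simp add: Y_def coordf_add Ustar_add bounded_op_H2_def)
  next
    fix g c assume "g \<in> l2"
    then show "Y (\<lambda>i. c * g i) = (\<lambda>j. c * Y g j)"
      using X C_l2 by (simp add: Y_def coordf_scale Ustar_scale bounded_op_H2_def)
  next
    fix g assume "g \<in> l2"
    then show "Y (Mz g) = Mz (Y g)"
      using comm C_l2 by (simp add: Y_def nshift_coordf[symmetric]) (simp add: nshift_def)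
  qed
  from conv \<open>l2_bounded Y\<close> have "l2_bounded (cauchy_prod (Y delta0))"
    by (rule l2_bounded_cong)
  then obtain \<phi> where \<phi>: "\<phi> \<in> H_infty" "taylor_coeff \<phi> = Y delta0"
    using bounded_multiplier_in_H_infty by blast
  have "X a = Hk_mult_op b (taylor_coeff \<phi>) a" if "a \<in> l2" for a
  proof -
    have "X a = coordf b (Y (Ustar b a))"
      by (simp add: Y_def)
    moreover have "Ustar b a \<in> l2"
      using U that by (simp add: l2_bounded_def)
    ultimately show ?thesis
      using conv \<phi>(2) by (simp add: Hk_mult_op_def)
  qed
  with \<phi>(1) show ?thesis by blast
qed

theorem theorem4p5:
  fixes n :: nat and b :: "nat \<Rightarrow> complex"
    and X :: "(nat \<Rightarrow> complex) \<Rightarrow> (nat \<Rightarrow> complex)"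
  assumes "n \<ge> 1"
    and "\<forall>t\<ge>n. b t = 0"
    and "bounded_op_H2 X"
  shows "(\<forall>a\<in>l2. X (nshift b a) = nshift b (X a)) \<longleftrightarrow>
         (\<exists>\<phi>\<in>H_infty. \<forall>a\<in>l2. X a = (\<lambda>j. toeplitz \<phi> a j + N_op b \<phi> a j))"
proof
  assume "\<forall>a\<in>l2. X (nshift b a) = nshift b (X a)"
  with assms(2,3) show "\<exists>\<phi>\<in>H_infty. \<forall>a\<in>l2. X a = (\<lambda>j. toeplitz \<phi> a j + N_op b \<phi> a j)"
    unfolding Hk_mult_op_taylor_coeff[symmetric] by (rule commuting_with_nshift_imp_Hk_mult_op)
next
  assume "\<exists>\<phi>\<in>H_infty. \<forall>a\<in>l2. X a = (\<lambda>j. toeplitz \<phi> a j + N_op b \<phi> a j)"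
  then obtain \<phi> where X: "\<And>a. a \<in> l2 \<Longrightarrow> X a = Hk_mult_op b (taylor_coeff \<phi>) a"
    by (auto simp: Hk_mult_op_taylor_coeff)
  show "\<forall>a\<in>l2. X (nshift b a) = nshift b (X a)"
    using X nshift_l2[OF assms(2)] Hk_mult_op_nshift by simp
qed

end
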